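(* Let $\vec{\sigma}=(\sigma_1,\sigma_2,\ldots)$ be a weighting sequence with mean $\alpha$, i.e. $\lim_{n\to\infty}\frac1n\sum_{k=1}^n\sigma_k=\alpha$. For $0<x<1$ consider the $\vec{\sigma}$-weighted Boltzmann measure $\mathbb{P}_{\vec{\sigma},x}$ on permutations, let $N$ be the size of the ground set of a random permutation, and let $x=x(\mu)$ be chosen so that $\mathbb{E}_{\vec{\sigma},x}(N)=\mu$. Let $X$ be the number of cycles of the random permutation. Then $\mathbb{E}_{\vec{\sigma},x}(X)=\mathbb{V}_{\vec{\sigma},x}(X)\sim\alpha\log\mu$ as $x\to1^-$ or $\mu\to\infty$.
   Context: A weighting sequence is a sequence $\vec{\sigma}=(\sigma_1,\sigma_2,\ldots)$ of nonnegative reals; the weight of $\pi\in S_n$ is $w_{\vec{\sigma}}(\pi)=\prod_i\sigma_i^{c_i(\pi)}$ with $c_i(\pi)$ the number of $i$-cycles of $\pi$. The $\vec{\sigma}$-weighted Boltzmann measure with parameter $x>0$ is the probability measure on $\bigcup_{k\ge0}S_k$ given by \[ \mathbb{P}_{\vec{\sigma},x}(\pi)=\frac{w_{\vec{\sigma}}(\pi)\,x^{|\pi|}/|\pi|!}{\exp\left(\sum_{k\ge1}\sigma_kx^k/k\right)}, \] where $|\pi|$ is the size of the ground set of $\pi$; $\mathbb{E}_{\vec{\sigma},x}$ and $\mathbb{V}_{\vec{\sigma},x}$ are expectation and variance under it. *)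

theory Defs
  imports "HOL-Probability.Probability" "HOL-Combinatorics.Permutations"
    "HOL-Library.Landau_Symbols"
begin

definition perm_space :: "(nat \<times> (nat \<Rightarrow> nat)) set" where
  "perm_space = (SIGMA n:UNIV. {p. p permutes {..<n}})"

definition pcycle :: "(nat \<Rightarrow> nat) \<Rightarrow> nat \<Rightarrow> nat set" where
  "pcycle p a = {(p ^^ k) a | k. True}"

definition cycles_of :: "nat \<Rightarrow> (nat \<Rightarrow> nat) \<Rightarrow> nat set set" where
  "cycles_of n p = pcycle p ` {..<n}"

definition ncyc :: "nat \<Rightarrow> nat \<Rightarrow> (nat \<Rightarrow> nat) \<Rightarrow> nat" where
  "ncyc i n p = card {C \<in> cycles_of n p. card C = i}"

text \<open>Weight w_sigma(pi) = prod_i sigma_i ^ c_i(pi) (sigma indexed from 1; sigma 0 unused).\<close>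
definition wt :: "(nat \<Rightarrow> real) \<Rightarrow> nat \<times> (nat \<Rightarrow> nat) \<Rightarrow> real" where
  "wt \<sigma> np = (\<Prod>i\<in>{1..fst np}. \<sigma> i ^ ncyc i (fst np) (snd np))"

definition bnorm :: "(nat \<Rightarrow> real) \<Rightarrow> real \<Rightarrow> real" where
  "bnorm \<sigma> x = exp (\<Sum>k. \<sigma> (Suc k) * x ^ Suc k / real (Suc k))"

definition boltzmann :: "(nat \<Rightarrow> real) \<Rightarrow> real \<Rightarrow> (nat \<times> (nat \<Rightarrow> nat)) measure" where
  "boltzmann \<sigma> x = density (count_space perm_space)
     (\<lambda>np. ennreal (wt \<sigma> np * x ^ fst np / fact (fst np) / bnorm \<sigma> x))"

definition bexp :: "(nat \<Rightarrow> real) \<Rightarrow> real \<Rightarrow> (nat \<times> (nat \<Rightarrow> nat) \<Rightarrow> real) \<Rightarrow> real" where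
  "bexp \<sigma> x Y = (\<integral>np. Y np \<partial>boltzmann \<sigma> x)"

definition bvar :: "(nat \<Rightarrow> real) \<Rightarrow> real \<Rightarrow> (nat \<times> (nat \<Rightarrow> nat) \<Rightarrow> real) \<Rightarrow> real" where
  "bvar \<sigma> x Y = (\<integral>np. (Y np - bexp \<sigma> x Y)^2 \<partial>boltzmann \<sigma> x)"

definition gsize :: "nat \<times> (nat \<Rightarrow> nat) \<Rightarrow> real" where
  "gsize np = real (fst np)"

definition ncycles :: "nat \<times> (nat \<Rightarrow> nat) \<Rightarrow> real" where
  "ncycles np = real (card (cycles_of (fst np) (snd np)))"

end

theory Submission
  imports Defs "HOL-Combinatorics.Orbits" "HOL-Combinatorics.Cycles" "HOL-Real_Asymp.Real_Asymp"
begin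

text \<open>Splitting off the cycle through one point shows that the weighted sums
  \<open>F(h, n) = \<Sum>\<^sub>\<pi> w(\<pi>) h(c(\<pi>))\<close> over \<open>\<pi> \<in> S\<^sub>n\<close>, where \<open>c(\<pi>)\<close> counts cycles, satisfy
  \<open>F(h, n + 1) = \<Sum>\<^sub>k n!/(n - k)! \<sigma>(k + 1) F(h(_ + 1), n - k)\<close>.
  For \<open>h(j) = 1, j, j\<^sup>2\<close> the exponential generating functions \<open>P\<close> therefore solve linear equations
  \<open>P' = S' (P + q(S) e\<^sup>S)\<close>, where \<open>S(x) = \<Sum>\<^sub>k \<sigma>(k) x\<^sup>k / k\<close>, and so equal
  \<open>e\<^sup>S\<close>, \<open>S e\<^sup>S\<close> and \<open>(S + S\<^sup>2) e\<^sup>S\<close>. As the normaliser is \<open>e\<^sup>S\<close>, this gives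
  \<open>E X = V X = S(x)\<close> and \<open>E N = x S'(x)\<close>. An Abelian argument turns the Cesaro hypothesis into
  \<open>(1 - x) S'(x) \<rightarrow> \<alpha>\<close>; then l'Hopital's rule gives \<open>S(x) \<sim> \<alpha> (- ln (1 - x)) \<sim> \<alpha> ln (E N)\<close>
  as \<open>x \<rightarrow> 1\<^sup>-\<close>, and \<open>\<mu> = E N \<rightarrow> \<infinity>\<close> forces \<open>x(\<mu>) \<rightarrow> 1\<^sup>-\<close> by monotonicity.\<close>

section \<open>Permutations split at the cycle through a point\<close>

lemma cycle_of_list_funpow_nth:
  assumes "distinct cs" "i < length cs"
  shows "(cycle_of_list cs ^^ n) (cs ! i) = cs ! ((n + i) mod length cs)"
proof -
  have "(cycle_of_list cs ^^ n) (cs ! i) = map (cycle_of_list cs ^^ n) cs ! i"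
    using assms(2) by simp
  also have "\<dots> = rotate n cs ! i" by (simp only: cyclic_rotation[OF assms(1)])
  also have "\<dots> = cs ! ((n + i) mod length cs)" using assms(2) by (simp add: nth_rotate)
  finally show ?thesis .
qed

lemma orbit_cycle_of_list:
  assumes "distinct cs" "y \<in> set cs"
  shows "orbit (cycle_of_list cs) y = set cs"
proof -
  obtain i where i: "i < length cs" "y = cs ! i" using assms(2) by (metis in_set_conv_nth)
  have "orbit (cycle_of_list cs) y = {(cycle_of_list cs ^^ n) y | n. True}"
    by (rule orbit_altdef_permutation[OF permutation_of_cycle])
  also have "\<dots> = set cs"
  proof (intro set_eqI iffI)
    fix z assume "z \<in> {(cycle_of_list cs ^^ n) y | n. True}"
    then obtain n where "z = (cycle_of_list cs ^^ n) y" by auto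
    then show "z \<in> set cs" using i assms cycle_of_list_funpow_nth[OF assms(1) i(1), of n]
      by (metis length_pos_if_in_set mod_less_divisor nth_mem)
  next
    fix z assume "z \<in> set cs"
    then obtain j where j: "j < length cs" "z = cs ! j" by (metis in_set_conv_nth)
    have "(cycle_of_list cs ^^ (j + length cs - i)) y = cs ! ((j + length cs - i + i) mod length cs)"
      using cycle_of_list_funpow_nth[OF assms(1) i(1)] i by simp
    also have "\<dots> = z" using i j by simp
    finally show "z \<in> {(cycle_of_list cs ^^ n) y | n. True}" by blast
  qed
  finally show ?thesis .
qed

lemma cyclic_on_cycle_of_list:
  assumes "distinct cs" "cs \<noteq> []"
  shows "cyclic_on (cycle_of_list cs) (set cs)"
  using assms orbit_cycle_of_list[OF assms(1)] unfolding cyclic_on_def by (metis last_in_set)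

definition prepend_cycle :: "'a list \<Rightarrow> ('a \<Rightarrow> 'a) \<Rightarrow> 'a \<Rightarrow> 'a" where
  "prepend_cycle cs r = cycle_of_list cs \<circ> r"

context
  fixes cs :: "'a list" and r :: "'a \<Rightarrow> 'a" and B :: "'a set"
  assumes distinct: "distinct cs" and nonempty: "cs \<noteq> []"
    and r_permutes: "r permutes B" and disjoint: "set cs \<inter> B = {}"
begin

lemma prepend_cycle_permutes: "prepend_cycle cs r permutes (set cs \<union> B)"
  unfolding prepend_cycle_def
  by (rule permutes_compose[OF permutes_subset[OF r_permutes] permutes_subset[OF cycle_permutes]])
    auto

lemma prepend_cycle_on_cycle: "y \<in> set cs \<Longrightarrow> prepend_cycle cs r y = cycle_of_list cs y"
  unfolding prepend_cycle_def using r_permutes disjoint by (metis comp_apply disjoint_iff permutes_not_in)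

lemma prepend_cycle_off_cycle:
  assumes "y \<in> B" shows "prepend_cycle cs r y = r y"
proof -
  have "r y \<notin> set cs" using assms r_permutes disjoint by (auto simp: permutes_in_image)
  then show ?thesis unfolding prepend_cycle_def by (simp add: id_outside_supp)
qed

lemma orbit_prepend_cycle_on_cycle:
  assumes "y \<in> set cs" shows "orbit (prepend_cycle cs r) y = set cs"
proof (rule orbit_cyclic_eq3[OF _ assms])
  show "cyclic_on (prepend_cycle cs r) (set cs)" unfolding prepend_cycle_def
    by (rule permutes_comp_preserves_cyclic1[OF r_permutes cyclic_on_cycle_of_list[OF distinct nonempty]
        disjoint subset_refl])
qed

lemma orbit_prepend_cycle_off_cycle:
  assumes "y \<in> B" shows "orbit (prepend_cycle cs r) y = orbit r y"
proof (rule orbit_cong0[OF assms])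
  show "prepend_cycle cs r \<in> B \<rightarrow> B"
    using prepend_cycle_off_cycle r_permutes permutes_in_image by fastforce
  show "\<And>y. y \<in> B \<Longrightarrow> prepend_cycle cs r y = r y" by (rule prepend_cycle_off_cycle)
qed

lemma perm_restrict_prepend_cycle: "perm_restrict (prepend_cycle cs r) B = r"
  using prepend_cycle_off_cycle r_permutes by (auto simp: fun_eq_iff perm_restrict_def permutes_not_in)

lemma support_prepend_cycle: "support (prepend_cycle cs r) (hd cs) = cs"
proof -
  let ?p = "prepend_cycle cs r"
  have funpow: "(?p ^^ n) (hd cs) = cs ! (n mod length cs)" for n
  proof -
    have "(?p ^^ n) (hd cs) = (cycle_of_list cs ^^ n) (hd cs) \<and> (?p ^^ n) (hd cs) \<in> set cs"
    proof (induction n)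
      case 0
      then show ?case using nonempty by simp
    next
      case (Suc n)
      have e: "(?p ^^ n) (hd cs) = (cycle_of_list cs ^^ n) (hd cs)" using Suc.IH by (rule conjunct1)
      have m: "(?p ^^ n) (hd cs) \<in> set cs" using Suc.IH by (rule conjunct2)
      have "(?p ^^ Suc n) (hd cs) = cycle_of_list cs ((?p ^^ n) (hd cs))"
        using prepend_cycle_on_cycle[OF m] by simp
      moreover have "cycle_of_list cs ((?p ^^ n) (hd cs)) \<in> set cs"
        using m permutes_in_image[OF cycle_permutes[of cs]] by blast
      ultimately show ?case using e by simp
    qed
    then show ?thesis using cycle_of_list_funpow_nth[OF distinct, of 0 n] nonempty
      by (simp add: hd_conv_nth)
  qed
  have "least_power ?p (hd cs) = length cs"
    unfolding least_power_def
  proof (rule Least_equality)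
    show "(?p ^^ length cs) (hd cs) = hd cs \<and> 0 < length cs"
      using funpow nonempty by (simp add: hd_conv_nth)
  next
    fix y assume y: "(?p ^^ y) (hd cs) = hd cs \<and> 0 < y"
    then have "cs ! (y mod length cs) = cs ! 0" using funpow nonempty by (simp add: hd_conv_nth)
    then have "y mod length cs = 0" using nth_eq_iff_index_eq[OF distinct] nonempty by simp
    then show "length cs \<le> y" using y by (simp add: dvd_imp_le mod_eq_0_iff_dvd)
  qed
  then show ?thesis using funpow by (intro nth_equalityI) auto
qed

end

context
  fixes p :: "'a \<Rightarrow> 'a" and A :: "'a set" and a :: 'a
  assumes p_permutes: "p permutes A" and finite: "finite A" and a_in: "a \<in> A"
begin

lemma support_cons: "support p a = a # tl (support p a)"
  and distinct_support: "distinct (support p a)"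
  and set_support: "set (support p a) = orbit p a"
proof -
  have perm: "permutation p" using p_permutes finite permutation_permutes by blast
  show "distinct (support p a)" by (rule cycle_of_permutation[OF perm])
  have "least_power p a > 0" by (rule least_power_of_permutation(2)[OF perm])
  then have "support p a \<noteq> []" "hd (support p a) = a" by (simp_all add: hd_map)
  then show "support p a = a # tl (support p a)" by (metis list.collapse)
  show "set (support p a) = orbit p a"
    unfolding support_set[OF perm] orbit_altdef_permutation[OF perm] by auto
qed

lemma tl_support_distinct_subset: "distinct (tl (support p a)) \<and> set (tl (support p a)) \<subseteq> A - {a}"
proof -
  define bs where "bs = tl (support p a)"
  have "set (support p a) \<subseteq> A"
    unfolding set_support by (rule permutes_orbit_subset[OF p_permutes a_in])
  then show ?thesis using distinct_support support_cons unfolding bs_def[symmetric] by auto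
qed

lemma perm_restrict_off_support_permutes:
  "perm_restrict p (A - set (support p a)) permutes (A - insert a (set (tl (support p a))))"
proof -
  have "perm_restrict p (A - set (support p a)) permutes (A - set (support p a))"
    unfolding set_support by (rule perm_restrict_diff_cyclic[OF p_permutes cyclic_on_orbit[OF p_permutes finite]])
  then show ?thesis using support_cons by (metis list.simps(15))
qed

lemma prepend_cycle_support: "prepend_cycle (support p a) (perm_restrict p (A - set (support p a))) = p"
proof
  fix y
  have perm: "permutation p" using p_permutes finite permutation_permutes by blast
  have cyclic: "cyclic_on p (orbit p a)" by (rule cyclic_on_orbit[OF p_permutes finite])
  show "prepend_cycle (support p a) (perm_restrict p (A - set (support p a))) y = p y"
  proof (cases "y \<in> set (support p a)")
    case True
    then show ?thesis unfolding prepend_cycle_def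
      using cycle_restrict[OF perm True] by (simp add: perm_restrict_def)
  next
    case False
    then have "p y \<notin> set (support p a)"
      using cyclic_on_f_in[OF p_permutes cyclic] set_support by auto
    show ?thesis
    proof (cases "y \<in> A")
      case True
      then show ?thesis unfolding prepend_cycle_def
        using False id_outside_supp[OF \<open>p y \<notin> set (support p a)\<close>] by (simp add: perm_restrict_def)
    next
      case outside: False
      then show ?thesis unfolding prepend_cycle_def using id_outside_supp[OF False] p_permutes
        by (simp add: perm_restrict_def permutes_not_in)
    qed
  qed
qed

end

text \<open>A permutation of \<open>A\<close> is the same as the list of its cycle through \<open>a\<close>, starting at \<open>a\<close>,
  together with a permutation of the remaining points.\<close>

lemma sum_permutes_by_cycle_through:
  assumes finite: "finite A" and a_in: "a \<in> A"
  shows "(\<Sum>p | p permutes A. g p) =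
    (\<Sum>bs | distinct bs \<and> set bs \<subseteq> A - {a}.
       \<Sum>r | r permutes (A - insert a (set bs)). g (prepend_cycle (a # bs) r))"
proof -
  define L where "L = {bs. distinct bs \<and> set bs \<subseteq> A - {a}}"
  define P where "P = (SIGMA bs:L. {r. r permutes (A - insert a (set bs))})"
  have "finite L"
    unfolding L_def using finite_subset_distinct[of "A - {a}"] finite by (simp add: conj_commute)
  have "(\<Sum>p | p permutes A. g p) = (\<Sum>(bs, r) \<in> P. g (prepend_cycle (a # bs) r))"
  proof (rule sum.reindex_bij_witness[where i = "\<lambda>(bs, r). prepend_cycle (a # bs) r"
        and j = "\<lambda>p. (tl (support p a), perm_restrict p (A - set (support p a)))"])
    fix p assume "p \<in> {p. p permutes A}"
    then have p: "p permutes A" by simp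
    have cons: "support p a = a # tl (support p a)" by (rule support_cons[OF p finite a_in])
    show "(case (tl (support p a), perm_restrict p (A - set (support p a))) of
        (bs, r) \<Rightarrow> prepend_cycle (a # bs) r) = p"
      unfolding case_prod_conv cons[symmetric] by (rule prepend_cycle_support[OF p finite a_in])
    show "(case (tl (support p a), perm_restrict p (A - set (support p a))) of
        (bs, r) \<Rightarrow> g (prepend_cycle (a # bs) r)) = g p"
      unfolding case_prod_conv cons[symmetric] prepend_cycle_support[OF p finite a_in] ..
    show "(tl (support p a), perm_restrict p (A - set (support p a))) \<in> P"
      using tl_support_distinct_subset[OF p finite a_in] perm_restrict_off_support_permutes[OF p finite a_in]
      unfolding P_def L_def by simp
  next
    fix x assume "x \<in> P"
    then obtain bs r where x: "x = (bs, r)" "bs \<in> L" "r permutes (A - set (a # bs))"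
      unfolding P_def by auto
    then have bs: "distinct (a # bs)" "set (a # bs) \<subseteq> A" using a_in unfolding L_def by auto
    have disjoint: "set (a # bs) \<inter> (A - set (a # bs)) = {}" by auto
    note prepend = support_prepend_cycle[OF bs(1) _ x(3) disjoint]
      perm_restrict_prepend_cycle[OF bs(1) _ x(3) disjoint]
      prepend_cycle_permutes[OF bs(1) _ x(3) disjoint]
    show "(tl (support (case x of (bs, r) \<Rightarrow> prepend_cycle (a # bs) r) a),
        perm_restrict (case x of (bs, r) \<Rightarrow> prepend_cycle (a # bs) r)
          (A - set (support (case x of (bs, r) \<Rightarrow> prepend_cycle (a # bs) r) a))) = x"
      using prepend x by simp
    have "set (a # bs) \<union> (A - set (a # bs)) = A" using bs(2) by blast
    then show "(case x of (bs, r) \<Rightarrow> prepend_cycle (a # bs) r) \<in> {p. p permutes A}"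
      using prepend(3) x(1) by simp
  qed
  also have "\<dots> = (\<Sum>bs\<in>L. \<Sum>r | r permutes (A - insert a (set bs)). g (prepend_cycle (a # bs) r))"
    unfolding P_def using \<open>finite L\<close> finite by (subst sum.Sigma) (auto intro: finite_permutations)
  finally show ?thesis unfolding L_def .
qed

lemma sum_distinct_lists_by_length:
  fixes g :: "nat \<Rightarrow> real"
  assumes "finite B"
  shows "(\<Sum>bs | distinct bs \<and> set bs \<subseteq> B. g (length bs)) =
    (\<Sum>k\<le>card B. fact (card B) / fact (card B - k) * g k)"
proof -
  define L where "L = {bs. distinct bs \<and> set bs \<subseteq> B}"
  have "finite L" unfolding L_def using finite_subset_distinct[OF assms] by (simp add: conj_commute)
  have "(\<Sum>bs\<in>L. g (length bs)) = (\<Sum>k\<le>card B. \<Sum>bs | bs \<in> L \<and> length bs = k. g (length bs))"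
    using assms by (intro sum.group[symmetric, OF \<open>finite L\<close>])
      (auto simp: L_def distinct_card[symmetric] intro: card_mono)
  also have "\<dots> = (\<Sum>k\<le>card B. fact (card B) / fact (card B - k) * g k)"
  proof (rule sum.cong[OF refl])
    fix k assume k: "k \<in> {..card B}"
    have "{bs. bs \<in> L \<and> length bs = k} = {xs. length xs = k \<and> distinct xs \<and> set xs \<subseteq> B}"
      unfolding L_def by auto
    then have "card {bs. bs \<in> L \<and> length bs = k} = \<Prod>{card B - k + 1..card B}"
      using card_lists_distinct_length_eq[OF assms, of k] k by simp
    moreover have "fact (card B) = fact (card B - k) * \<Prod>{Suc (card B - k)..card B}"
      by (rule fact_eq_fact_times) (use k in simp)
    then have "fact (card B) = fact (card B - k) * real (\<Prod>{card B - k + 1..card B})"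
      by (metis of_nat_fact of_nat_mult Suc_eq_plus1)
    ultimately show "(\<Sum>bs | bs \<in> L \<and> length bs = k. g (length bs)) =
        fact (card B) / fact (card B - k) * g k"
      by simp
  qed
  finally show ?thesis unfolding L_def by simp
qed

section \<open>Cycle-weighted sums over permutations\<close>

definition cycle_weight :: "(nat \<Rightarrow> real) \<Rightarrow> (nat \<Rightarrow> real) \<Rightarrow> 'a set \<Rightarrow> ('a \<Rightarrow> 'a) \<Rightarrow> real" where
  "cycle_weight f h A p = (\<Prod>C \<in> orbit p ` A. f (card C)) * h (card (orbit p ` A))"

text \<open>The recursion splits off the cycle through one point: when it has length \<open>k + 1\<close>, its other
  points form one of \<open>m! / (m - k)!\<close> lists of distinct points (see \<open>sum_cycle_weight\<close>).\<close>

fun cycle_weight_sum :: "(nat \<Rightarrow> real) \<Rightarrow> nat \<Rightarrow> (nat \<Rightarrow> real) \<Rightarrow> real" where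
  "cycle_weight_sum f 0 h = h 0"
| "cycle_weight_sum f (Suc m) h =
    (\<Sum>k\<le>m. fact m / fact (m - k) * f (Suc k) * cycle_weight_sum f (m - k) (h \<circ> Suc))"

lemma cycle_weight_prepend_cycle:
  assumes distinct: "distinct cs" and nonempty: "cs \<noteq> []" and r_permutes: "r permutes B"
    and disjoint: "set cs \<inter> B = {}" and finite: "finite B"
  shows "cycle_weight f h (set cs \<union> B) (prepend_cycle cs r) = f (length cs) * cycle_weight f (h \<circ> Suc) B r"
proof -
  note prepend = orbit_prepend_cycle_on_cycle[OF assms(1-4)] orbit_prepend_cycle_off_cycle[OF assms(1-4)]
  have "orbit (prepend_cycle cs r) ` set cs = {set cs}"
    using prepend(1) nonempty by (auto simp: image_constant_conv cong: image_cong)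
  moreover have "orbit (prepend_cycle cs r) ` B = orbit r ` B" using prepend(2) by auto
  ultimately have orbits: "orbit (prepend_cycle cs r) ` (set cs \<union> B) = insert (set cs) (orbit r ` B)"
    by (auto simp: image_Un)
  have new: "set cs \<notin> orbit r ` B"
  proof
    assume "set cs \<in> orbit r ` B"
    then have "set cs \<subseteq> B" using permutes_orbit_subset[OF r_permutes] by auto
    then show False using disjoint nonempty by (metis Int_absorb2 set_empty)
  qed
  have "finite (orbit r ` B)" using finite by simp
  then show ?thesis
    unfolding cycle_weight_def orbits using new by (simp add: distinct_card[OF distinct])
qed

lemma sum_cycle_weight:
  assumes "finite A"
  shows "(\<Sum>p | p permutes A. cycle_weight f h A p) = cycle_weight_sum f (card A) h"
  using assms
proof (induction "card A" arbitrary: A h rule: less_induct)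
  case less
  show ?case
  proof (cases "A = {}")
    case True
    then show ?thesis by (simp add: cycle_weight_def)
  next
    case False
    then obtain a where a: "a \<in> A" by auto
    define m where "m = card (A - {a})"
    have card_A: "card A = Suc m" unfolding m_def by (rule card_Suc_Diff1[symmetric, OF less.prems a])
    have "(\<Sum>p | p permutes A. cycle_weight f h A p) =
      (\<Sum>bs | distinct bs \<and> set bs \<subseteq> A - {a}. f (Suc (length bs)) *
         cycle_weight_sum f (m - length bs) (h \<circ> Suc))"
      unfolding sum_permutes_by_cycle_through[OF less.prems a]
    proof (rule sum.cong[OF refl])
      fix bs assume "bs \<in> {bs. distinct bs \<and> set bs \<subseteq> A - {a}}"
      then have bs: "distinct (a # bs)" "set (a # bs) \<subseteq> A" using a by auto
      define B where "B = A - insert a (set bs)"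
      have B: "set (a # bs) \<inter> B = {}" "set (a # bs) \<union> B = A" "finite B"
        using bs less.prems by (auto simp: B_def)
      have "card B = m - length bs"
        using bs less.prems unfolding B_def m_def by (simp add: card_Diff_subset distinct_card)
      moreover have "card B < card A" using card_A calculation by simp
      ultimately have "(\<Sum>r | r permutes B. cycle_weight f (h \<circ> Suc) B r) =
          cycle_weight_sum f (m - length bs) (h \<circ> Suc)"
        using less.hyps B(3) by metis
      then show "(\<Sum>r | r permutes B. cycle_weight f h A (prepend_cycle (a # bs) r)) =
          f (Suc (length bs)) * cycle_weight_sum f (m - length bs) (h \<circ> Suc)"
        using cycle_weight_prepend_cycle[OF bs(1) _ _ B(1) B(3), of _ f h] B(2)
        by (simp add: sum_distrib_left[symmetric])
    qed
    also have "\<dots> = cycle_weight_sum f (card A) h"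
      unfolding sum_distinct_lists_by_length[where g = "\<lambda>k. f (Suc k) * cycle_weight_sum f (m - k) (h \<circ> Suc)",
        OF finite_Diff[OF less.prems]]
      by (simp add: card_A m_def mult.assoc)
    finally show ?thesis .
  qed
qed

lemma cycle_weight_sum_eq_sum:
  "cycle_weight_sum f n h = (\<Sum>p | p permutes {..<n}. cycle_weight f h {..<n} p)"
  using sum_cycle_weight[of "{..<n}" f h] by simp

lemma cycle_weight_sum_add:
  "cycle_weight_sum f n (\<lambda>j. h1 j + h2 j) = cycle_weight_sum f n h1 + cycle_weight_sum f n h2"
  unfolding cycle_weight_sum_eq_sum cycle_weight_def by (simp add: distrib_left sum.distrib)

lemma cycle_weight_sum_cmult: "cycle_weight_sum f n (\<lambda>j. c * h j) = c * cycle_weight_sum f n h"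
  unfolding cycle_weight_sum_eq_sum cycle_weight_def by (simp add: sum_distrib_left mult_ac)

lemma cycle_weight_sum_nonneg:
  assumes "\<And>k. 0 \<le> f (Suc k)" and "\<And>j. 0 \<le> h j"
  shows "0 \<le> cycle_weight_sum f n h"
  using assms(2)
proof (induction n arbitrary: h rule: less_induct)
  case (less n)
  then show ?case
    using assms(1) by (cases n) (auto intro!: sum_nonneg mult_nonneg_nonneg)
qed

section \<open>The Boltzmann measure as a series\<close>

lemma pcycle_eq_orbit: "p permutes {..<n} \<Longrightarrow> pcycle p a = orbit p a"
  unfolding pcycle_def
  by (rule orbit_altdef_permutation[symmetric]) (meson finite_lessThan permutation_permutes)

lemma cycles_of_eq_orbits: "p permutes {..<n} \<Longrightarrow> cycles_of n p = orbit p ` {..<n}"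
  unfolding cycles_of_def using pcycle_eq_orbit by auto

lemma wt_eq_prod_orbits:
  assumes p: "p permutes {..<n}"
  shows "wt \<sigma> (n, p) = (\<Prod>C \<in> orbit p ` {..<n}. \<sigma> (card C))"
proof -
  let ?S = "orbit p ` {..<n}"
  have "card ` ?S \<subseteq> {1..n}"
  proof
    fix i assume "i \<in> card ` ?S"
    then obtain a where a: "a < n" "i = card (orbit p a)" by auto
    have sub: "orbit p a \<subseteq> {..<n}" using permutes_orbit_subset[OF p] a by simp
    then have "card (orbit p a) \<le> n" using card_mono[OF _ sub] by simp
    moreover have "orbit p a \<noteq> {}" "finite (orbit p a)"
      using orbit_nonempty[of p a] finite_subset[OF sub] by auto
    ultimately show "i \<in> {1..n}" using a by (simp add: Suc_leI card_gt_0_iff)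
  qed
  then have "(\<Prod>C \<in> ?S. \<sigma> (card C)) = (\<Prod>i\<in>{1..n}. \<Prod>C | C \<in> ?S \<and> card C = i. \<sigma> (card C))"
    by (intro prod.group[symmetric]) auto
  also have "\<dots> = (\<Prod>i\<in>{1..n}. \<sigma> i ^ card {C \<in> ?S. card C = i})"
    by (intro prod.cong refl) (simp add: prod_constant[symmetric] del: prod_constant)
  finally show ?thesis by (simp add: wt_def ncyc_def cycles_of_eq_orbits[OF p])
qed

lemma sum_wt_cycle_function:
  "(\<Sum>p | p permutes {..<n}. wt \<sigma> (n, p) * h (card (cycles_of n p))) = cycle_weight_sum \<sigma> n h"
  unfolding cycle_weight_sum_eq_sum cycle_weight_def
  by (intro sum.cong refl) (simp add: wt_eq_prod_orbits cycles_of_eq_orbits)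

lemma nn_integral_perm_space:
  "(\<integral>\<^sup>+y. F y \<partial>count_space perm_space) = (\<Sum>n. \<Sum>p | p permutes {..<n}. F (n, p))"
proof -
  define P where "P n = Pair n ` {p. p permutes {..<n}}" for n :: nat
  have P_finite: "finite (P n)" for n unfolding P_def by (intro finite_imageI finite_permutations) simp
  have indicator_sum: "F y * indicator perm_space y = (\<Sum>n. F y * indicator (P n) y)" for y
  proof -
    have "y \<notin> P n" if "n \<noteq> fst y" for n using that by (auto simp: P_def)
    then have "(\<Sum>n. F y * indicator (P n) y) = (\<Sum>n\<in>{fst y}. F y * indicator (P n) y)"
      by (intro suminf_finite) auto
    moreover have "y \<in> P (fst y) \<longleftrightarrow> y \<in> perm_space"
      by (cases y) (auto simp: P_def perm_space_def)
    ultimately show ?thesis by (simp add: indicator_def)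
  qed
  have "(\<integral>\<^sup>+y. F y \<partial>count_space perm_space) =
      (\<integral>\<^sup>+y. F y * indicator perm_space y \<partial>count_space UNIV)"
    by (rule nn_integral_count_space_indicator) (simp add: NO_MATCH_def)
  also have "\<dots> = (\<integral>\<^sup>+y. (\<Sum>n. F y * indicator (P n) y) \<partial>count_space UNIV)"
    by (simp only: indicator_sum)
  also have "\<dots> = (\<Sum>n. \<integral>\<^sup>+y. F y * indicator (P n) y \<partial>count_space UNIV)"
    by (rule nn_integral_suminf) simp
  also have "\<dots> = (\<Sum>n. \<Sum>y\<in>P n. F y)"
    by (simp add: nn_integral_count_space_indicator[symmetric] NO_MATCH_def
        nn_integral_count_space_finite[OF P_finite])
  also have "\<dots> = (\<Sum>n. \<Sum>p | p permutes {..<n}. F (n, p))"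
    unfolding P_def by (subst sum.reindex) (auto simp: inj_on_def)
  finally show ?thesis .
qed

lemma wt_nonneg:
  assumes "\<And>k. 0 \<le> \<sigma> (Suc k)" shows "0 \<le> wt \<sigma> np"
  unfolding wt_def
proof (intro prod_nonneg zero_le_power)
  fix i assume "i \<in> {1..fst np}"
  then show "0 \<le> \<sigma> i" using assms[of "i - 1"] by simp
qed

lemma has_bochner_integral_boltzmann:
  assumes x: "0 < x" and \<sigma>: "\<And>k. 0 \<le> \<sigma> (Suc k)" and Y: "\<And>y. 0 \<le> Y y"
    and sums: "(\<lambda>n. \<Sum>p | p permutes {..<n}. wt \<sigma> (n, p) * x ^ n / fact n * Y (n, p)) sums L"
  shows "has_bochner_integral (boltzmann \<sigma> x) Y (L / bnorm \<sigma> x)"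
proof -
  define V where "V n = (\<Sum>p | p permutes {..<n}. wt \<sigma> (n, p) * x ^ n / fact n * Y (n, p))" for n
  have bnorm_pos: "0 < bnorm \<sigma> x" unfolding bnorm_def by simp
  have wt: "0 \<le> wt \<sigma> np" for np by (rule wt_nonneg) (rule \<sigma>)
  have density_nonneg: "0 \<le> wt \<sigma> np * x ^ fst np / fact (fst np) / bnorm \<sigma> x" for np
    using wt x bnorm_pos by simp
  have V_nonneg: "0 \<le> V n" for n unfolding V_def using wt x Y by (intro sum_nonneg) simp
  have sums_V: "(\<lambda>n. V n / bnorm \<sigma> x) sums (L / bnorm \<sigma> x)" using sums_divide[OF sums] unfolding V_def .
  have "(\<integral>\<^sup>+y. ennreal (Y y) \<partial>boltzmann \<sigma> x) =
      (\<integral>\<^sup>+y. ennreal (wt \<sigma> y * x ^ fst y / fact (fst y) / bnorm \<sigma> x * Y y) \<partial>count_space perm_space)"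
    unfolding boltzmann_def using density_nonneg Y
    by (subst nn_integral_density) (auto intro!: nn_integral_cong simp: ennreal_mult[symmetric])
  also have "\<dots> = (\<Sum>n. ennreal (V n / bnorm \<sigma> x))"
    unfolding nn_integral_perm_space
  proof (rule suminf_cong)
    fix n
    have "0 \<le> wt \<sigma> (n, p) * x ^ n / fact n / bnorm \<sigma> x * Y (n, p)" for p
      using mult_nonneg_nonneg[OF density_nonneg[of "(n, p)"] Y[of "(n, p)"]] by simp
    then show "(\<Sum>p | p permutes {..<n}. ennreal (wt \<sigma> (n, p) * x ^ fst (n, p) / fact (fst (n, p)) /
        bnorm \<sigma> x * Y (n, p))) = ennreal (V n / bnorm \<sigma> x)"
      unfolding V_def sum_divide_distrib by (simp add: sum_ennreal field_simps)
  qed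
  also have "\<dots> = ennreal (\<Sum>n. V n / bnorm \<sigma> x)"
    by (rule suminf_ennreal2[OF _ sums_summable[OF sums_V]]) (use V_nonneg bnorm_pos in simp)
  also have "\<dots> = ennreal (L / bnorm \<sigma> x)" by (simp only: sums_unique[OF sums_V, symmetric])
  finally have nn_integral: "(\<integral>\<^sup>+y. ennreal (Y y) \<partial>boltzmann \<sigma> x) = ennreal (L / bnorm \<sigma> x)" .
  have measurable: "Y \<in> borel_measurable (boltzmann \<sigma> x)"
    unfolding boltzmann_def by (subst measurable_cong_sets[OF sets_density refl]) simp
  have "0 \<le> L / bnorm \<sigma> x" using sums_le[OF _ sums_zero sums_V] V_nonneg bnorm_pos by simp
  from nn_integral_eq_integrable[OF measurable _ this] show ?thesis
    using nn_integral Y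
    by (simp add: has_bochner_integral_iff)
qed

section \<open>Power series with nonnegative coefficients\<close>

definition pseries :: "(nat \<Rightarrow> real) \<Rightarrow> real \<Rightarrow> real" where
  "pseries c y = (\<Sum>n. c n * y ^ n)"

definition nonneg_powser :: "(nat \<Rightarrow> real) \<Rightarrow> bool" where
  "nonneg_powser c \<longleftrightarrow> (\<forall>n. 0 \<le> c n) \<and> (\<forall>r. 0 \<le> r \<and> r < 1 \<longrightarrow> summable (\<lambda>n. c n * r ^ n))"

lemma nonneg_powser_nonneg: "nonneg_powser c \<Longrightarrow> 0 \<le> c n"
  unfolding nonneg_powser_def by auto

lemma summable_norm_nonneg_powser:
  assumes "nonneg_powser c" "\<bar>y\<bar> < 1"
  shows "summable (\<lambda>n. norm (c n * y ^ n))"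
proof -
  have "summable (\<lambda>n. c n * \<bar>y\<bar> ^ n)" using assms unfolding nonneg_powser_def by auto
  moreover have "norm (c n * y ^ n) = c n * \<bar>y\<bar> ^ n" for n
    using nonneg_powser_nonneg[OF assms(1)] by (simp add: abs_mult power_abs)
  ultimately show ?thesis by simp
qed

lemma sums_pseries: "nonneg_powser c \<Longrightarrow> \<bar>y\<bar> < 1 \<Longrightarrow> (\<lambda>n. c n * y ^ n) sums pseries c y"
  unfolding pseries_def
  by (rule summable_sums, rule summable_norm_cancel, rule summable_norm_nonneg_powser)

lemma nonneg_powser_add: "nonneg_powser c \<Longrightarrow> nonneg_powser d \<Longrightarrow> nonneg_powser (\<lambda>n. c n + d n)"
  unfolding nonneg_powser_def by (auto simp: distrib_right intro: summable_add)

lemma nonneg_powser_cmult: "0 \<le> a \<Longrightarrow> nonneg_powser c \<Longrightarrow> nonneg_powser (\<lambda>n. a * c n)"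
  unfolding nonneg_powser_def by (auto simp: mult.assoc intro: summable_mult)

lemma nonneg_powser_comparison:
  assumes "\<And>n. 0 \<le> c n" "\<And>n. c n \<le> d n" "nonneg_powser d"
  shows "nonneg_powser c"
  unfolding nonneg_powser_def
proof (intro conjI allI impI)
  fix r :: real assume r: "0 \<le> r \<and> r < 1"
  show "summable (\<lambda>n. c n * r ^ n)"
  proof (rule summable_comparison_test'[where g = "\<lambda>n. d n * r ^ n"])
    show "summable (\<lambda>n. d n * r ^ n)" using assms(3) r unfolding nonneg_powser_def by auto
    show "norm (c n * r ^ n) \<le> d n * r ^ n" for n
      using assms(1,2)[of n] r by (simp add: mult_right_mono)
  qed
qed (use assms in auto)

lemma nonneg_powser_shift:
  assumes "0 \<le> c 0" "nonneg_powser (\<lambda>n. c (Suc n))" shows "nonneg_powser c"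
proof -
  have "0 \<le> c n" for n using assms nonneg_powser_nonneg[OF assms(2)] by (cases n) auto
  then show ?thesis using assms(2) unfolding nonneg_powser_def by (simp add: summable_powser_split_head)
qed

lemma pseries_add:
  "nonneg_powser c \<Longrightarrow> nonneg_powser d \<Longrightarrow> \<bar>y\<bar> < 1 \<Longrightarrow>
    pseries (\<lambda>n. c n + d n) y = pseries c y + pseries d y"
  using sums_unique[OF sums_add[OF sums_pseries sums_pseries]] by (simp add: pseries_def distrib_right)

lemma pseries_cmult: "nonneg_powser c \<Longrightarrow> \<bar>y\<bar> < 1 \<Longrightarrow> pseries (\<lambda>n. a * c n) y = a * pseries c y"
  using sums_unique[OF sums_mult[OF sums_pseries]] by (simp add: pseries_def mult.assoc)

lemma pseries_at_0: "pseries c 0 = c 0"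
  unfolding pseries_def using powser_zero[of c] by simp

lemma DERIV_pseries:
  "nonneg_powser c \<Longrightarrow> \<bar>y\<bar> < 1 \<Longrightarrow> DERIV (pseries c) y :> pseries (diffs c) y"
  unfolding pseries_def
  by (rule termdiffs_strong'[of 1]) (simp_all add: summable_norm_cancel[OF summable_norm_nonneg_powser])

lemma recurrence_step_bound:
  assumes s: "nonneg_powser (\<lambda>k. s (Suc k))" and \<rho>: "0 < \<rho>"
    and rec: "\<And>n. real (Suc n) * c (Suc n) = (\<Sum>k\<le>n. s (Suc k) * (c (n - k) + e (n - k)))"
    and c_le: "\<And>j. j \<le> m \<Longrightarrow> c j * \<rho> ^ j \<le> A" and e_le: "\<And>j. e j * \<rho> ^ j \<le> A"
  shows "real (Suc m) * (c (Suc m) * \<rho> ^ Suc m) \<le> (\<Sum>k\<le>m. s (Suc k) * \<rho> ^ Suc k) * (2 * A)"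
proof -
  have "real (Suc m) * (c (Suc m) * \<rho> ^ Suc m) =
      (\<Sum>k\<le>m. (s (Suc k) * \<rho> ^ Suc k) * (c (m - k) * \<rho> ^ (m - k) + e (m - k) * \<rho> ^ (m - k)))"
    unfolding mult.assoc[symmetric] rec sum_distrib_right
  proof (intro sum.cong refl)
    fix k assume "k \<in> {..m}"
    then have "\<rho> ^ Suc m = \<rho> ^ Suc k * \<rho> ^ (m - k)" by (simp flip: power_add)
    then show "s (Suc k) * (c (m - k) + e (m - k)) * \<rho> ^ Suc m =
        s (Suc k) * \<rho> ^ Suc k * (c (m - k) * \<rho> ^ (m - k) + e (m - k) * \<rho> ^ (m - k))"
      by (simp only: algebra_simps)
  qed
  also have "\<dots> \<le> (\<Sum>k\<le>m. (s (Suc k) * \<rho> ^ Suc k) * (2 * A))"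
  proof (intro sum_mono mult_left_mono)
    fix k assume "k \<in> {..m}"
    then show "c (m - k) * \<rho> ^ (m - k) + e (m - k) * \<rho> ^ (m - k) \<le> 2 * A"
      using c_le[of "m - k"] e_le[of "m - k"] by simp
  qed (use nonneg_powser_nonneg[OF s] \<rho> in simp)
  finally show ?thesis by (simp only: sum_distrib_right)
qed

lemma recurrence_scaled_bounded:
  assumes s: "nonneg_powser (\<lambda>k. s (Suc k))" and c: "\<And>n. 0 \<le> c n" and e: "nonneg_powser e"
    and rec: "\<And>n. real (Suc n) * c (Suc n) = (\<Sum>k\<le>n. s (Suc k) * (c (n - k) + e (n - k)))"
    and \<rho>: "0 < \<rho>" "\<rho> < 1"
  obtains A where "\<And>n. c n * \<rho> ^ n \<le> A"
proof -
  define M where "M = \<rho> * pseries (\<lambda>k. s (Suc k)) \<rho>"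
  define N where "N = nat \<lceil>2 * M\<rceil>"
  define A where "A = max (pseries e \<rho>) (Max ((\<lambda>n. c n * \<rho> ^ n) ` {..N}))"
  have \<rho>_abs: "\<bar>\<rho>\<bar> < 1" using \<rho> by simp
  have e_le: "e n * \<rho> ^ n \<le> A" for n
    using sum_le_suminf[OF sums_summable[OF sums_pseries[OF e \<rho>_abs]], of "{n}"]
      nonneg_powser_nonneg[OF e] \<rho> by (simp add: A_def pseries_def le_max_iff_disj)
  have A_nonneg: "0 \<le> A" using e_le[of 0] nonneg_powser_nonneg[OF e, of 0] by simp
  have M_ge: "(\<Sum>k\<le>m. s (Suc k) * \<rho> ^ Suc k) \<le> M" for m
  proof -
    have "(\<Sum>k\<le>m. s (Suc k) * \<rho> ^ k) \<le> pseries (\<lambda>k. s (Suc k)) \<rho>"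
      using sum_le_suminf[OF sums_summable[OF sums_pseries[OF s \<rho>_abs]], of "{..m}"]
        nonneg_powser_nonneg[OF s] \<rho> by (simp add: pseries_def)
    then have "\<rho> * (\<Sum>k\<le>m. s (Suc k) * \<rho> ^ k) \<le> M" unfolding M_def using \<rho> by simp
    then show ?thesis by (simp add: sum_distrib_left mult_ac)
  qed
  have "c n * \<rho> ^ n \<le> A" for n
  proof (induction n rule: less_induct)
    case (less n)
    show ?case
    proof (cases "n \<le> N")
      case True
      then show ?thesis unfolding A_def by (intro max.coboundedI2 Max_ge) auto
    next
      case False
      then obtain m where m: "n = Suc m" by (cases n) auto
      have "real (Suc m) * (c (Suc m) * \<rho> ^ Suc m) \<le> (\<Sum>k\<le>m. s (Suc k) * \<rho> ^ Suc k) * (2 * A)"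
        using less m by (intro recurrence_step_bound[OF s \<rho>(1) rec _ e_le]) simp
      also have "\<dots> \<le> M * (2 * A)" using M_ge[of m] A_nonneg by (simp add: mult_right_mono)
      also have "\<dots> \<le> real (Suc m) * A"
      proof -
        have "2 * M \<le> real (Suc m)" using False m unfolding N_def by linarith
        from mult_right_mono[OF this A_nonneg] show ?thesis by (simp add: mult_ac)
      qed
      finally show ?thesis using m by (simp del: of_nat_Suc)
    qed
  qed
  then show ?thesis by (rule that)
qed

text \<open>Coefficients obeying such a convolution recurrence grow at most geometrically with any ratio
  exceeding 1, because the factor \<open>n + 1\<close> on the left eventually dominates the bounded
  convolution on the right.\<close>

lemma nonneg_powser_recurrence:
  assumes s: "nonneg_powser (\<lambda>k. s (Suc k))" and c: "\<And>n. 0 \<le> c n" and e: "nonneg_powser e"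
    and rec: "\<And>n. real (Suc n) * c (Suc n) = (\<Sum>k\<le>n. s (Suc k) * (c (n - k) + e (n - k)))"
  shows "nonneg_powser c"
  unfolding nonneg_powser_def
proof (intro conjI allI impI)
  fix r :: real assume r: "0 \<le> r \<and> r < 1"
  define \<rho> where "\<rho> = (1 + r) / 2"
  have \<rho>: "0 < \<rho>" "\<rho> < 1" "r < \<rho>" using r by (auto simp: \<rho>_def)
  obtain A where A: "\<And>n. c n * \<rho> ^ n \<le> A"
    using recurrence_scaled_bounded[OF s c e rec \<rho>(1,2)] by blast
  show "summable (\<lambda>n. c n * r ^ n)"
  proof (rule summable_comparison_test'[where g = "\<lambda>n. A * (r / \<rho>) ^ n"])
    show "summable (\<lambda>n. A * (r / \<rho>) ^ n)" using r \<rho> by (intro summable_mult summable_geometric) simp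
    fix n
    have "c n * r ^ n = (c n * \<rho> ^ n) * (r / \<rho>) ^ n" using \<rho> by (simp add: power_divide)
    also have "\<dots> \<le> A * (r / \<rho>) ^ n" using A[of n] r \<rho> by (intro mult_right_mono) auto
    finally show "norm (c n * r ^ n) \<le> A * (r / \<rho>) ^ n" using c[of n] r by simp
  qed
qed (rule c)

lemma pseries_diffs_convolution:
  assumes s: "nonneg_powser (\<lambda>k. s (Suc k))" and d: "nonneg_powser d" and y: "\<bar>y\<bar> < 1"
    and rec: "\<And>n. real (Suc n) * c (Suc n) = (\<Sum>k\<le>n. s (Suc k) * d (n - k))"
  shows "pseries (diffs c) y = pseries (\<lambda>k. s (Suc k)) y * pseries d y"
proof -
  have "pseries (\<lambda>k. s (Suc k)) y * pseries d y =
      (\<Sum>n. \<Sum>k\<le>n. (s (Suc k) * y ^ k) * (d (n - k) * y ^ (n - k)))"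
    unfolding pseries_def
    by (rule Cauchy_product[OF summable_norm_nonneg_powser[OF s y] summable_norm_nonneg_powser[OF d y]])
  also have "\<dots> = (\<Sum>n. diffs c n * y ^ n)"
  proof (rule suminf_cong)
    fix n
    have "(\<Sum>k\<le>n. (s (Suc k) * y ^ k) * (d (n - k) * y ^ (n - k))) = (\<Sum>k\<le>n. s (Suc k) * d (n - k)) * y ^ n"
      unfolding sum_distrib_right
    proof (intro sum.cong refl)
      fix k assume "k \<in> {..n}"
      then have "y ^ n = y ^ k * y ^ (n - k)" by (simp flip: power_add)
      then show "(s (Suc k) * y ^ k) * (d (n - k) * y ^ (n - k)) = s (Suc k) * d (n - k) * y ^ n"
        by (simp only: mult_ac)
    qed
    then show "(\<Sum>k\<le>n. (s (Suc k) * y ^ k) * (d (n - k) * y ^ (n - k))) = diffs c n * y ^ n"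
      unfolding diffs_def rec by simp
  qed
  finally show ?thesis unfolding pseries_def by simp
qed

lemma DERIV_pseries_recurrence:
  assumes "nonneg_powser (\<lambda>k. s (Suc k))" "nonneg_powser c" "nonneg_powser d" "\<bar>y\<bar> < 1"
    and "\<And>n. real (Suc n) * c (Suc n) = (\<Sum>k\<le>n. s (Suc k) * d (n - k))"
  shows "DERIV (pseries c) y :> pseries (\<lambda>k. s (Suc k)) y * pseries d y"
  using DERIV_pseries[OF assms(2,4)] unfolding pseries_diffs_convolution[OF assms(1,3,4,5)] .

text \<open>Variation of constants: \<open>P e\<^sup>-\<^sup>S - Q \<circ> S\<close> has derivative zero.\<close>

lemma exp_ode_solution:
  fixes P S S' Q q :: "real \<Rightarrow> real"
  assumes P: "\<And>t. \<bar>t\<bar> < 1 \<Longrightarrow> (P has_real_derivative S' t * (P t + q (S t) * exp (S t))) (at t)"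
    and S: "\<And>t. \<bar>t\<bar> < 1 \<Longrightarrow> (S has_real_derivative S' t) (at t)"
    and Q: "\<And>u. (Q has_real_derivative q u) (at u)"
    and "S 0 = 0" "Q 0 = 0" "\<bar>y\<bar> < 1"
  shows "P y = (P 0 + Q (S y)) * exp (S y)"
proof -
  define F where "F t = P t * exp (- S t) - Q (S t)" for t
  have "(F has_real_derivative 0) (at t within {-1<..<1})" if "t \<in> {-1<..<1}" for t
  proof -
    have t: "\<bar>t\<bar> < 1" using that by auto
    have "(F has_real_derivative S' t * (P t + q (S t) * exp (S t)) * exp (- S t)
        + exp (- S t) * - S' t * P t - q (S t) * S' t) (at t)"
      unfolding F_def
      by (intro DERIV_diff DERIV_mult DERIV_fun_exp DERIV_minus DERIV_chain2[OF Q] P S t)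
    moreover have "S' t * (P t + q (S t) * exp (S t)) * exp (- S t) + exp (- S t) * - S' t * P t
        - q (S t) * S' t = S' t * q (S t) * (exp (S t) * exp (- S t) - 1)"
      by (simp add: algebra_simps)
    ultimately have "(F has_real_derivative 0) (at t)" by (simp add: exp_minus_inverse)
    then show ?thesis by (rule has_field_derivative_at_within)
  qed
  then obtain C where "\<forall>t\<in>{-1<..<1}. F t = C"
    using has_field_derivative_zero_constant[of "{-1<..<1}" F] by auto
  then have "F y = F 0" using assms(6) by (auto simp: abs_less_iff)
  then show ?thesis using assms(4,5) unfolding F_def by (simp add: exp_minus field_simps)
qed

section \<open>Generating functions of the cycle statistics\<close>

definition cycle_egf :: "(nat \<Rightarrow> real) \<Rightarrow> (nat \<Rightarrow> real) \<Rightarrow> nat \<Rightarrow> real" where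
  "cycle_egf \<sigma> h n = cycle_weight_sum \<sigma> n h / fact n"

text \<open>\<open>cgf \<sigma> x = \<Sum>\<^sub>k \<sigma>\<^sub>k x\<^sup>k / k\<close> is the exponent in \<open>bnorm\<close>; its term for \<open>n = 0\<close> vanishes
  because division by zero yields 0.\<close>

definition cgf :: "(nat \<Rightarrow> real) \<Rightarrow> real \<Rightarrow> real" where
  "cgf \<sigma> = pseries (\<lambda>n. \<sigma> n / real n)"

definition cgf_deriv :: "(nat \<Rightarrow> real) \<Rightarrow> real \<Rightarrow> real" where
  "cgf_deriv \<sigma> = pseries (\<lambda>n. \<sigma> (Suc n))"

lemma cycle_egf_recurrence:
  "real (Suc n) * cycle_egf \<sigma> h (Suc n) = (\<Sum>k\<le>n. \<sigma> (Suc k) * cycle_egf \<sigma> (h \<circ> Suc) (n - k))"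
proof -
  have "real (Suc n) * cycle_egf \<sigma> h (Suc n) = cycle_weight_sum \<sigma> (Suc n) h / fact n"
    unfolding cycle_egf_def by (simp add: field_simps del: of_nat_Suc)
  also have "\<dots> = (\<Sum>k\<le>n. \<sigma> (Suc k) * cycle_egf \<sigma> (h \<circ> Suc) (n - k))"
    unfolding cycle_weight_sum.simps sum_divide_distrib cycle_egf_def
    by (intro sum.cong refl) (simp add: field_simps)
  finally show ?thesis .
qed

lemma cycle_egf_add: "cycle_egf \<sigma> (\<lambda>j. h1 j + h2 j) n = cycle_egf \<sigma> h1 n + cycle_egf \<sigma> h2 n"
  unfolding cycle_egf_def cycle_weight_sum_add by (simp add: add_divide_distrib)

lemma cycle_egf_cmult: "cycle_egf \<sigma> (\<lambda>j. c * h j) n = c * cycle_egf \<sigma> h n"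
  unfolding cycle_egf_def cycle_weight_sum_cmult by simp

lemma cycle_egf_nonneg: "(\<And>k. 0 \<le> \<sigma> (Suc k)) \<Longrightarrow> (\<And>j. 0 \<le> h j) \<Longrightarrow> 0 \<le> cycle_egf \<sigma> h n"
  unfolding cycle_egf_def by (simp add: cycle_weight_sum_nonneg)

lemma cgf_at_0: "cgf \<sigma> 0 = 0"
  unfolding cgf_def pseries_at_0 by simp

lemma cycle_egf_const_recurrence:
  "real (Suc n) * cycle_egf \<sigma> (\<lambda>_. 1) (Suc n) = (\<Sum>k\<le>n. \<sigma> (Suc k) * cycle_egf \<sigma> (\<lambda>_. 1) (n - k))"
  using cycle_egf_recurrence[of n \<sigma> "\<lambda>_. 1"] by (simp add: comp_def)

lemma cycle_egf_real_recurrence: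
  "real (Suc n) * cycle_egf \<sigma> real (Suc n) =
    (\<Sum>k\<le>n. \<sigma> (Suc k) * (cycle_egf \<sigma> real (n - k) + cycle_egf \<sigma> (\<lambda>_. 1) (n - k)))"
  using cycle_egf_recurrence[of n \<sigma> real] cycle_egf_add[of \<sigma> real "\<lambda>_. 1"]
  by (simp add: comp_def add.commute)

lemma cycle_egf_sq_recurrence:
  "real (Suc n) * cycle_egf \<sigma> (\<lambda>j. real j ^ 2) (Suc n) =
    (\<Sum>k\<le>n. \<sigma> (Suc k) * (cycle_egf \<sigma> (\<lambda>j. real j ^ 2) (n - k) +
      (cycle_egf \<sigma> (\<lambda>_. 1) (n - k) + 2 * cycle_egf \<sigma> real (n - k))))"
proof -
  have "cycle_egf \<sigma> ((\<lambda>j. real j ^ 2) \<circ> Suc) m =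
      cycle_egf \<sigma> (\<lambda>j. real j ^ 2 + (1 + 2 * real j)) m" for m
    by (simp add: comp_def power2_eq_square algebra_simps)
  then show ?thesis
    using cycle_egf_recurrence[of n \<sigma> "\<lambda>j. real j ^ 2"] by (simp add: cycle_egf_add cycle_egf_cmult)
qed

lemma boltzmann_series_term:
  "(\<Sum>p | p permutes {..<n}. wt \<sigma> (n, p) * x ^ n / fact n * (c n * h (card (cycles_of n p)))) =
    c n * cycle_egf \<sigma> h n * x ^ n"
proof -
  have "(\<Sum>p | p permutes {..<n}. wt \<sigma> (n, p) * x ^ n / fact n * (c n * h (card (cycles_of n p)))) =
      c n * x ^ n / fact n * (\<Sum>p | p permutes {..<n}. wt \<sigma> (n, p) * h (card (cycles_of n p)))"
    by (simp add: sum_distrib_left mult_ac)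
  then show ?thesis by (simp add: sum_wt_cycle_function cycle_egf_def)
qed

context
  fixes \<sigma> :: "nat \<Rightarrow> real"
  assumes \<sigma>: "nonneg_powser (\<lambda>n. \<sigma> (Suc n))"
begin

lemma weights_nonneg: "0 \<le> \<sigma> (Suc k)"
  by (rule nonneg_powser_nonneg[OF \<sigma>])

lemma nonneg_powser_cgf_coeffs: "nonneg_powser (\<lambda>n. \<sigma> n / real n)"
proof (rule nonneg_powser_shift[OF _ nonneg_powser_comparison[OF _ _ \<sigma>]])
  show "\<sigma> (Suc n) / real (Suc n) \<le> \<sigma> (Suc n)" for n
    using weights_nonneg[of n] by (simp add: divide_le_eq mult_le_cancel_left1 del: of_nat_Suc)
qed (simp_all add: weights_nonneg)

lemma DERIV_cgf: "\<bar>y\<bar> < 1 \<Longrightarrow> DERIV (cgf \<sigma>) y :> cgf_deriv \<sigma> y"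
proof -
  have "diffs (\<lambda>n. \<sigma> n / real n) = (\<lambda>n. \<sigma> (Suc n))"
    by (simp add: diffs_def fun_eq_iff del: of_nat_Suc)
  then show "\<bar>y\<bar> < 1 \<Longrightarrow> DERIV (cgf \<sigma>) y :> cgf_deriv \<sigma> y"
    unfolding cgf_def cgf_deriv_def using DERIV_pseries[OF nonneg_powser_cgf_coeffs] by metis
qed

lemma bnorm_eq_exp_cgf:
  assumes "\<bar>x\<bar> < 1" shows "bnorm \<sigma> x = exp (cgf \<sigma> x)"
proof -
  have "(\<lambda>n. \<sigma> n / real n * x ^ n) sums cgf \<sigma> x"
    unfolding cgf_def by (rule sums_pseries[OF nonneg_powser_cgf_coeffs assms])
  then have "(\<lambda>n. \<sigma> (Suc n) / real (Suc n) * x ^ Suc n) sums (cgf \<sigma> x - \<sigma> 0 / real 0 * x ^ 0)"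
    by (subst sums_Suc_iff) simp
  then have "(\<lambda>k. \<sigma> (Suc k) * x ^ Suc k / real (Suc k)) sums cgf \<sigma> x"
    by (simp add: times_divide_eq_left del: of_nat_Suc)
  then show ?thesis unfolding bnorm_def by (simp add: sums_iff)
qed

lemma nonneg_powser_cycle_egf_const: "nonneg_powser (cycle_egf \<sigma> (\<lambda>_. 1))"
  by (rule nonneg_powser_recurrence[OF \<sigma> _ _, where e = "\<lambda>_. 0"])
    (simp_all add: cycle_egf_nonneg weights_nonneg nonneg_powser_def cycle_egf_const_recurrence
      del: of_nat_Suc)

lemma nonneg_powser_cycle_egf_real: "nonneg_powser (cycle_egf \<sigma> real)"
  by (rule nonneg_powser_recurrence[OF \<sigma> _ nonneg_powser_cycle_egf_const cycle_egf_real_recurrence])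
    (simp add: cycle_egf_nonneg weights_nonneg)

lemma nonneg_powser_cycle_egf_sq: "nonneg_powser (cycle_egf \<sigma> (\<lambda>j. real j ^ 2))"
  by (rule nonneg_powser_recurrence[OF \<sigma> _ _ cycle_egf_sq_recurrence])
    (simp_all add: cycle_egf_nonneg weights_nonneg nonneg_powser_add nonneg_powser_cmult
      nonneg_powser_cycle_egf_const nonneg_powser_cycle_egf_real)

lemma pseries_cycle_egf_const:
  assumes "\<bar>y\<bar> < 1" shows "pseries (cycle_egf \<sigma> (\<lambda>_. 1)) y = exp (cgf \<sigma> y)"
proof -
  have "pseries (cycle_egf \<sigma> (\<lambda>_. 1)) y = (pseries (cycle_egf \<sigma> (\<lambda>_. 1)) 0 + 0) * exp (cgf \<sigma> y)"
  proof (rule exp_ode_solution[where Q = "\<lambda>_. 0" and q = "\<lambda>_. 0"])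
    fix t :: real assume t: "\<bar>t\<bar> < 1"
    show "DERIV (pseries (cycle_egf \<sigma> (\<lambda>_. 1))) t :>
        cgf_deriv \<sigma> t * (pseries (cycle_egf \<sigma> (\<lambda>_. 1)) t + 0 * exp (cgf \<sigma> t))"
      using DERIV_pseries_recurrence[OF \<sigma> nonneg_powser_cycle_egf_const
          nonneg_powser_cycle_egf_const t cycle_egf_const_recurrence]
      by (simp add: cgf_deriv_def)
  qed (use assms DERIV_cgf cgf_at_0 in simp_all)
  then show ?thesis by (simp add: pseries_at_0 cycle_egf_def)
qed

lemma pseries_cycle_egf_real:
  assumes "\<bar>y\<bar> < 1" shows "pseries (cycle_egf \<sigma> real) y = cgf \<sigma> y * exp (cgf \<sigma> y)"
proof -
  have "pseries (cycle_egf \<sigma> real) y = (pseries (cycle_egf \<sigma> real) 0 + cgf \<sigma> y) * exp (cgf \<sigma> y)"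
  proof (rule exp_ode_solution[where Q = "\<lambda>u. u" and q = "\<lambda>_. 1"])
    fix t :: real assume t: "\<bar>t\<bar> < 1"
    show "DERIV (pseries (cycle_egf \<sigma> real)) t :>
        cgf_deriv \<sigma> t * (pseries (cycle_egf \<sigma> real) t + 1 * exp (cgf \<sigma> t))"
      using DERIV_pseries_recurrence[OF \<sigma> nonneg_powser_cycle_egf_real
          nonneg_powser_add[OF nonneg_powser_cycle_egf_real nonneg_powser_cycle_egf_const]
          t cycle_egf_real_recurrence]
      by (simp add: cgf_deriv_def pseries_add nonneg_powser_cycle_egf_real
          nonneg_powser_cycle_egf_const pseries_cycle_egf_const t)
  qed (use assms DERIV_cgf cgf_at_0 in simp_all)
  then show ?thesis by (simp add: pseries_at_0 cycle_egf_def)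
qed

lemma pseries_cycle_egf_sq:
  assumes "\<bar>y\<bar> < 1"
  shows "pseries (cycle_egf \<sigma> (\<lambda>j. real j ^ 2)) y = (cgf \<sigma> y + cgf \<sigma> y ^ 2) * exp (cgf \<sigma> y)"
proof -
  have "pseries (cycle_egf \<sigma> (\<lambda>j. real j ^ 2)) y =
      (pseries (cycle_egf \<sigma> (\<lambda>j. real j ^ 2)) 0 + (cgf \<sigma> y + cgf \<sigma> y ^ 2)) * exp (cgf \<sigma> y)"
  proof (rule exp_ode_solution[where Q = "\<lambda>u. u + u ^ 2" and q = "\<lambda>u. 1 + 2 * u"])
    fix t :: real assume t: "\<bar>t\<bar> < 1"
    note egf = nonneg_powser_cycle_egf_const nonneg_powser_cycle_egf_real
      nonneg_powser_cycle_egf_sq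
    have "pseries (\<lambda>n. cycle_egf \<sigma> (\<lambda>j. real j ^ 2) n +
        (cycle_egf \<sigma> (\<lambda>_. 1) n + 2 * cycle_egf \<sigma> real n)) t =
        pseries (cycle_egf \<sigma> (\<lambda>j. real j ^ 2)) t + (1 + 2 * cgf \<sigma> t) * exp (cgf \<sigma> t)"
      using egf t by (simp add: pseries_add pseries_cmult nonneg_powser_add nonneg_powser_cmult
          pseries_cycle_egf_const pseries_cycle_egf_real algebra_simps)
    then show "DERIV (pseries (cycle_egf \<sigma> (\<lambda>j. real j ^ 2))) t :> cgf_deriv \<sigma> t *
        (pseries (cycle_egf \<sigma> (\<lambda>j. real j ^ 2)) t + (1 + 2 * cgf \<sigma> t) * exp (cgf \<sigma> t))"
      using DERIV_pseries_recurrence[OF \<sigma> egf(3) _ t cycle_egf_sq_recurrence] egf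
      by (simp add: cgf_deriv_def nonneg_powser_add nonneg_powser_cmult)
  next
    show "((\<lambda>u. u + u ^ 2) has_real_derivative 1 + 2 * u) (at u)" for u :: real
      by (auto intro!: derivative_eq_intros)
  qed (use assms DERIV_cgf cgf_at_0 in simp_all)
  then show ?thesis by (simp add: pseries_at_0 cycle_egf_def)
qed

lemma sums_size_cycle_egf_const:
  assumes y: "\<bar>y\<bar> < 1"
  shows "(\<lambda>n. real n * cycle_egf \<sigma> (\<lambda>_. 1) n * y ^ n) sums (y * cgf_deriv \<sigma> y * exp (cgf \<sigma> y))"
proof -
  let ?c = "cycle_egf \<sigma> (\<lambda>_. 1)"
  have "summable (\<lambda>n. diffs ?c n * y ^ n)"
    by (rule termdiff_converges[where K = 1]) (use y nonneg_powser_cycle_egf_const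
        in \<open>auto intro: summable_norm_cancel[OF summable_norm_nonneg_powser]\<close>)
  then have "(\<lambda>n. diffs ?c n * y ^ n) sums (cgf_deriv \<sigma> y * exp (cgf \<sigma> y))"
    using pseries_diffs_convolution[OF \<sigma> nonneg_powser_cycle_egf_const y
        cycle_egf_const_recurrence] pseries_cycle_egf_const[OF y]
    by (simp add: sums_iff pseries_def cgf_deriv_def)
  from sums_mult[OF this, of y] have "(\<lambda>n. real (Suc n) * ?c (Suc n) * y ^ Suc n) sums
      (y * cgf_deriv \<sigma> y * exp (cgf \<sigma> y))"
    by (simp add: diffs_def mult_ac del: of_nat_Suc)
  then have "(\<lambda>n. real n * ?c n * y ^ n) sums (y * cgf_deriv \<sigma> y * exp (cgf \<sigma> y) + real 0 * ?c 0 * y ^ 0)"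
    by (subst sums_Suc_iff[symmetric])
  then show ?thesis by simp
qed

lemma has_bochner_integral_cycle_statistic:
  assumes x: "0 < x" "x < 1" and c: "\<And>n. 0 \<le> c n" and h: "\<And>j. 0 \<le> h j"
    and Y: "\<And>n p. Y (n, p) = c n * h (card (cycles_of n p))"
    and sums: "(\<lambda>n. c n * cycle_egf \<sigma> h n * x ^ n) sums L"
  shows "has_bochner_integral (boltzmann \<sigma> x) Y (L / exp (cgf \<sigma> x))"
proof -
  have "(\<lambda>n. \<Sum>p | p permutes {..<n}. wt \<sigma> (n, p) * x ^ n / fact n * Y (n, p)) sums L"
    using sums by (simp only: Y boltzmann_series_term)
  moreover have "0 \<le> Y y" for y using c h Y by (cases y) simp
  ultimately show ?thesis
    using has_bochner_integral_boltzmann[where \<sigma> = \<sigma>, OF x(1) weights_nonneg] bnorm_eq_exp_cgf x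
    by simp
qed

lemma bexp_ncycles:
  assumes x: "0 < x" "x < 1" shows "bexp \<sigma> x ncycles = cgf \<sigma> x"
proof -
  have "(\<lambda>n. 1 * cycle_egf \<sigma> real n * x ^ n) sums (cgf \<sigma> x * exp (cgf \<sigma> x))"
    using sums_pseries[OF nonneg_powser_cycle_egf_real] pseries_cycle_egf_real x by simp
  from has_bochner_integral_cycle_statistic[OF x _ _ _ this] show ?thesis
    unfolding bexp_def by (simp add: ncycles_def has_bochner_integral_integral_eq)
qed

lemma bexp_gsize:
  assumes x: "0 < x" "x < 1" shows "bexp \<sigma> x gsize = x * cgf_deriv \<sigma> x"
proof -
  have "(\<lambda>n. real n * cycle_egf \<sigma> (\<lambda>_. 1) n * x ^ n) sums (x * cgf_deriv \<sigma> x * exp (cgf \<sigma> x))"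
    using sums_size_cycle_egf_const x by simp
  from has_bochner_integral_cycle_statistic[OF x _ _ _ this] show ?thesis
    unfolding bexp_def by (simp add: gsize_def has_bochner_integral_integral_eq)
qed

lemma bvar_ncycles:
  assumes x: "0 < x" "x < 1" shows "bvar \<sigma> x ncycles = cgf \<sigma> x"
proof -
  let ?S = "cgf \<sigma> x"
  have x_abs: "\<bar>x\<bar> < 1" using x by simp
  have "cycle_egf \<sigma> (\<lambda>j. (real j - ?S)\<^sup>2) n =
      cycle_egf \<sigma> (\<lambda>j. real j ^ 2 + (- 2 * ?S) * real j + ?S ^ 2 * 1) n" for n
    by (simp add: power2_eq_square algebra_simps)
  then have egf: "cycle_egf \<sigma> (\<lambda>j. (real j - ?S)\<^sup>2) n = cycle_egf \<sigma> (\<lambda>j. real j ^ 2) n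
      + (- 2 * ?S) * cycle_egf \<sigma> real n + ?S ^ 2 * cycle_egf \<sigma> (\<lambda>_. 1) n" for n
    by (simp only: cycle_egf_add cycle_egf_cmult)
  have "(\<lambda>n. cycle_egf \<sigma> (\<lambda>j. real j ^ 2) n * x ^ n + (- 2 * ?S) * (cycle_egf \<sigma> real n * x ^ n)
      + ?S ^ 2 * (cycle_egf \<sigma> (\<lambda>_. 1) n * x ^ n)) sums
      ((?S + ?S ^ 2) * exp ?S + (- 2 * ?S) * (?S * exp ?S) + ?S ^ 2 * exp ?S)"
    using sums_pseries[OF nonneg_powser_cycle_egf_sq x_abs]
      sums_pseries[OF nonneg_powser_cycle_egf_real x_abs]
      sums_pseries[OF nonneg_powser_cycle_egf_const x_abs]
    unfolding pseries_cycle_egf_sq[OF x_abs] pseries_cycle_egf_real[OF x_abs]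
      pseries_cycle_egf_const[OF x_abs]
    by (intro sums_add sums_mult)
  then have "(\<lambda>n. 1 * cycle_egf \<sigma> (\<lambda>j. (real j - ?S)\<^sup>2) n * x ^ n) sums (?S * exp ?S)"
    unfolding egf by (simp add: algebra_simps power2_eq_square)
  from has_bochner_integral_cycle_statistic[OF x _ _ _ this] show ?thesis
    unfolding bvar_def bexp_ncycles[OF x] by (simp add: ncycles_def has_bochner_integral_integral_eq)
qed

end

section \<open>Behaviour as \<open>x\<close> tends to 1\<close>

lemma sums_Suc_times_geometric:
  fixes r :: real
  assumes "\<bar>r\<bar> < 1"
  shows "(\<lambda>n. real (Suc n) * r ^ n) sums (1 / (1 - r) ^ 2)"
proof -
  have g: "summable (\<lambda>n. norm (r ^ n))" using summable_geometric[of "\<bar>r\<bar>"] assms by (simp add: power_abs)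
  have "(\<lambda>n. \<Sum>i\<le>n. r ^ i * r ^ (n - i)) sums ((\<Sum>n. r ^ n) * (\<Sum>n. r ^ n))"
    by (rule Cauchy_product_sums[OF g g])
  moreover have "(\<Sum>i\<le>n. r ^ i * r ^ (n - i)) = real (Suc n) * r ^ n" for n
    by (simp flip: power_add)
  ultimately show ?thesis using assms by (simp add: suminf_geometric power2_eq_square)
qed

lemma sums_partial_sums_times_geometric:
  assumes c: "nonneg_powser c" and x: "\<bar>x\<bar> < 1"
  shows "(\<lambda>n. (\<Sum>k\<le>n. c k) * x ^ n) sums (pseries c x / (1 - x))"
proof -
  have g: "summable (\<lambda>n. norm (x ^ n))" using summable_geometric[of "\<bar>x\<bar>"] x by (simp add: power_abs)
  have "(\<lambda>n. \<Sum>k\<le>n. (c k * x ^ k) * x ^ (n - k)) sums (pseries c x * (\<Sum>n. x ^ n))"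
    unfolding pseries_def by (rule Cauchy_product_sums[OF summable_norm_nonneg_powser[OF c x] g])
  moreover have "(\<Sum>k\<le>n. (c k * x ^ k) * x ^ (n - k)) = (\<Sum>k\<le>n. c k) * x ^ n" for n
    unfolding sum_distrib_right by (intro sum.cong refl) (simp add: mult.assoc flip: power_add)
  ultimately show ?thesis using x by (simp add: suminf_geometric)
qed

lemma nonneg_powser_of_mean:
  assumes nonneg: "\<forall>k\<ge>1. \<sigma> k \<ge> 0"
    and mean: "(\<lambda>n. (\<Sum>k=1..n. \<sigma> k) / real n) \<longlonglongrightarrow> \<alpha>"
  shows "nonneg_powser (\<lambda>n. \<sigma> (Suc n))"
proof -
  obtain C where C: "\<And>n. \<bar>(\<Sum>k=1..n. \<sigma> k) / real n\<bar> \<le> C"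
    using convergent_imp_Bseq[OF convergentI[OF mean]] by (auto simp: Bseq_def)
  have C_nonneg: "0 \<le> C" using order_trans[OF abs_ge_zero C[of 0]] .
  have le: "\<sigma> (Suc n) \<le> C * real (Suc n)" for n
  proof -
    have "\<sigma> (Suc n) \<le> (\<Sum>k=1..Suc n. \<sigma> k)" by (rule member_le_sum) (use nonneg in auto)
    also have "\<dots> \<le> C * real (Suc n)"
      using C[of "Suc n"] by (simp add: divide_le_eq abs_le_iff del: of_nat_Suc)
    finally show ?thesis .
  qed
  have "nonneg_powser (\<lambda>n. C * real (Suc n))"
    unfolding nonneg_powser_def
  proof (intro conjI allI impI)
    fix r :: real assume "0 \<le> r \<and> r < 1"
    then show "summable (\<lambda>n. C * real (Suc n) * r ^ n)"
      using sums_summable[OF sums_mult[OF sums_Suc_times_geometric, of r C]] by (simp add: mult.assoc)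
  qed (use C_nonneg in simp)
  then show ?thesis by (rule nonneg_powser_comparison[rotated 2]) (use nonneg le in simp_all)
qed

lemma abs_powser_le_linear_bound:
  fixes e :: "nat \<Rightarrow> real"
  assumes bound: "\<And>n. N \<le> n \<Longrightarrow> \<bar>e n\<bar> \<le> \<epsilon> * real (Suc n)" and x: "0 < x" "x < 1"
  shows "\<bar>\<Sum>n. e n * x ^ n\<bar> \<le> (\<Sum>n<N. \<bar>e n\<bar>) + \<epsilon> / (1 - x) ^ 2"
proof -
  have \<epsilon>: "0 \<le> \<epsilon>" using order_trans[OF abs_ge_zero bound[of N]] by (simp add: zero_le_mult_iff)
  define g where "g n = (if n < N then \<bar>e n\<bar> else 0) + \<epsilon> * (real (Suc n) * x ^ n)" for n
  have "(\<lambda>n. if n < N then \<bar>e n\<bar> else 0) sums (\<Sum>n<N. \<bar>e n\<bar>)"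
    using sums_If_finite_set[of "{..<N}" "\<lambda>n. \<bar>e n\<bar>"] by (simp add: lessThan_def)
  then have g_sums: "g sums ((\<Sum>n<N. \<bar>e n\<bar>) + \<epsilon> / (1 - x) ^ 2)"
    unfolding g_def using sums_mult[OF sums_Suc_times_geometric, of x \<epsilon>] x by (intro sums_add) auto
  have le: "norm (e n * x ^ n) \<le> g n" for n
  proof (cases "n < N")
    case True
    have "\<bar>e n\<bar> * x ^ n \<le> \<bar>e n\<bar>" using x by (intro mult_left_le power_le_one) auto
    moreover have "0 \<le> \<epsilon> * (real (Suc n) * x ^ n)" using x \<epsilon> by simp
    ultimately show ?thesis using True x by (simp add: g_def abs_mult del: of_nat_Suc)
  next
    case False
    then have "\<bar>e n\<bar> * x ^ n \<le> \<epsilon> * real (Suc n) * x ^ n" using bound x by (intro mult_right_mono) auto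
    then show ?thesis using False x by (simp add: g_def abs_mult mult.assoc)
  qed
  have "summable (\<lambda>n. norm (e n * x ^ n))" 
    by (rule summable_comparison_test'[OF sums_summable[OF g_sums]]) (use le in simp)
  then have "\<bar>\<Sum>n. e n * x ^ n\<bar> \<le> (\<Sum>n. norm (e n * x ^ n))" by (simp add: summable_rabs)
  also have "\<dots> \<le> suminf g" using le by (intro suminf_le sums_summable[OF g_sums] \<open>summable _\<close>)
  finally show ?thesis using g_sums by (simp add: sums_iff)
qed

lemma tendsto_powser_little_o_linear:
  fixes e :: "nat \<Rightarrow> real"
  assumes "(\<lambda>n. e n / real (Suc n)) \<longlonglongrightarrow> 0"
  shows "((\<lambda>x. (1 - x) ^ 2 * (\<Sum>n. e n * x ^ n)) \<longlongrightarrow> 0) (at_left 1)"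
proof (rule tendstoI)
  fix \<epsilon> :: real assume \<epsilon>: "\<epsilon> > 0"
  obtain N where N: "\<And>n. N \<le> n \<Longrightarrow> \<bar>e n / real (Suc n)\<bar> < \<epsilon> / 2"
    using LIMSEQ_D[OF assms, of "\<epsilon> / 2"] \<epsilon> by auto
  have bound: "\<bar>e n\<bar> \<le> \<epsilon> / 2 * real (Suc n)" if "N \<le> n" for n
    using N[OF that] by (simp add: abs_divide divide_less_eq del: of_nat_Suc)
  define K where "K = (\<Sum>n<N. \<bar>e n\<bar>)"
  have "((\<lambda>x. K * (1 - x) ^ 2) \<longlongrightarrow> K * (1 - 1) ^ 2) (at_left (1::real))"
    by (intro tendsto_intros)
  then have "eventually (\<lambda>x. K * (1 - x) ^ 2 < \<epsilon> / 2) (at_left (1::real))"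
    using \<epsilon> by (intro order_tendstoD) auto
  moreover have "eventually (\<lambda>x. x \<in> {0<..<1}) (at_left (1::real))" by (rule eventually_at_left_real) simp
  ultimately show "eventually (\<lambda>x. dist ((1 - x) ^ 2 * (\<Sum>n. e n * x ^ n)) 0 < \<epsilon>) (at_left 1)"
  proof eventually_elim
    case (elim x)
    then have "\<bar>\<Sum>n. e n * x ^ n\<bar> \<le> K + \<epsilon> / 2 / (1 - x) ^ 2"
      unfolding K_def by (intro abs_powser_le_linear_bound[OF bound]) auto
    then have "(1 - x) ^ 2 * \<bar>\<Sum>n. e n * x ^ n\<bar> \<le> K * (1 - x) ^ 2 + \<epsilon> / 2"
      using elim by (simp add: field_simps)
    then show ?case using elim by (simp add: abs_mult)
  qed
qed

lemma eventually_in_unit_interval_at_left_1: "eventually (\<lambda>x. 0 < x \<and> x < 1) (at_left (1::real))"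
  using eventually_at_left_real[of 0 1] by (auto elim: eventually_mono)

lemma filterlim_minus_ln_one_minus: "filterlim (\<lambda>x::real. - ln (1 - x)) at_top (at_left 1)"
  by real_asymp

context
  fixes \<sigma> :: "nat \<Rightarrow> real" and \<alpha> :: real
  assumes nonneg: "\<forall>k\<ge>1. \<sigma> k \<ge> 0"
    and mean: "(\<lambda>n. (\<Sum>k=1..n. \<sigma> k) / real n) \<longlonglongrightarrow> \<alpha>"
begin

lemma nonneg_powser_weights: "nonneg_powser (\<lambda>n. \<sigma> (Suc n))"
  by (rule nonneg_powser_of_mean[OF nonneg mean])

lemma tendsto_one_minus_times_cgf_deriv: "((\<lambda>x. (1 - x) * cgf_deriv \<sigma> x) \<longlongrightarrow> \<alpha>) (at_left 1)"
proof -
  note \<sigma> = nonneg_powser_weights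
  define e where "e n = (\<Sum>k\<le>n. \<sigma> (Suc k)) - \<alpha> * real (Suc n)" for n
  have "(\<Sum>k\<le>n. \<sigma> (Suc k)) = (\<Sum>k=1..Suc n. \<sigma> k)" for n by (induction n) simp_all
  then have "(\<lambda>n. e n / real (Suc n)) = (\<lambda>n. (\<Sum>k=1..Suc n. \<sigma> k) / real (Suc n) - \<alpha>)"
    by (simp add: e_def fun_eq_iff diff_divide_distrib del: of_nat_Suc)
  moreover have "(\<lambda>n. (\<Sum>k=1..Suc n. \<sigma> k) / real (Suc n) - \<alpha>) \<longlonglongrightarrow> \<alpha> - \<alpha>"
    using LIMSEQ_Suc[OF mean] by (intro tendsto_diff) simp_all
  ultimately have "((\<lambda>x. \<alpha> + (1 - x) ^ 2 * (\<Sum>n. e n * x ^ n)) \<longlongrightarrow> \<alpha> + 0) (at_left 1)"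
    by (intro tendsto_add tendsto_const tendsto_powser_little_o_linear) simp
  moreover have "eventually (\<lambda>x. \<alpha> + (1 - x) ^ 2 * (\<Sum>n. e n * x ^ n) = (1 - x) * cgf_deriv \<sigma> x)
      (at_left 1)"
    using eventually_in_unit_interval_at_left_1
  proof eventually_elim
    case (elim x)
    then have x: "\<bar>x\<bar> < 1" by simp
    have "(\<lambda>n. e n * x ^ n) sums (cgf_deriv \<sigma> x / (1 - x) - \<alpha> * (1 / (1 - x) ^ 2))"
      unfolding e_def left_diff_distrib mult.assoc cgf_deriv_def
      by (intro sums_diff sums_mult sums_partial_sums_times_geometric[OF \<sigma> x] sums_Suc_times_geometric x)
    then have "(1 - x) ^ 2 * (\<Sum>n. e n * x ^ n) =
        (1 - x) ^ 2 * (cgf_deriv \<sigma> x / (1 - x)) - (1 - x) ^ 2 * (\<alpha> * (1 / (1 - x) ^ 2))"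
      by (simp add: sums_iff right_diff_distrib)
    also have "\<dots> = (1 - x) * cgf_deriv \<sigma> x - \<alpha>" using elim by (simp add: power2_eq_square)
    finally show ?case by simp
  qed
  ultimately show ?thesis by (simp add: Lim_transform_eventually)
qed

lemma tendsto_cgf_over_minus_ln: "((\<lambda>x. cgf \<sigma> x / - ln (1 - x)) \<longlongrightarrow> \<alpha>) (at_left 1)"
proof (rule lhopital_left_at_top[OF filterlim_minus_ln_one_minus])
  show "eventually (\<lambda>x. 1 / (1 - x) \<noteq> 0) (at_left (1::real))"
    using eventually_in_unit_interval_at_left_1 by eventually_elim simp
  show "eventually (\<lambda>x. DERIV (cgf \<sigma>) x :> cgf_deriv \<sigma> x) (at_left 1)"
    using eventually_in_unit_interval_at_left_1 by eventually_elim (simp add: DERIV_cgf[OF nonneg_powser_weights])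
  show "eventually (\<lambda>x. DERIV (\<lambda>x. - ln (1 - x)) x :> 1 / (1 - x)) (at_left (1::real))"
    using eventually_in_unit_interval_at_left_1
    by eventually_elim (auto intro!: derivative_eq_intros simp: field_simps)
  show "((\<lambda>x. cgf_deriv \<sigma> x / (1 / (1 - x))) \<longlongrightarrow> \<alpha>) (at_left 1)"
    using tendsto_one_minus_times_cgf_deriv by (simp add: mult.commute)
qed

lemma tendsto_ln_mean_size_over_minus_ln:
  assumes pos: "\<alpha> > 0"
  shows "((\<lambda>x. ln (x * cgf_deriv \<sigma> x) / - ln (1 - x)) \<longlongrightarrow> 1) (at_left 1)"
proof -
  have "((\<lambda>x. ln x + ln ((1 - x) * cgf_deriv \<sigma> x)) \<longlongrightarrow> ln 1 + ln \<alpha>) (at_left 1)"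
    using pos by (intro tendsto_intros tendsto_one_minus_times_cgf_deriv) auto
  then have "((\<lambda>x. (ln x + ln ((1 - x) * cgf_deriv \<sigma> x)) / - ln (1 - x) + 1) \<longlongrightarrow> 0 + 1) (at_left 1)"
    by (intro tendsto_add tendsto_const tendsto_divide_0
        filterlim_at_top_imp_at_infinity[OF filterlim_minus_ln_one_minus])
  moreover have "eventually (\<lambda>x. (ln x + ln ((1 - x) * cgf_deriv \<sigma> x)) / - ln (1 - x) + 1 =
      ln (x * cgf_deriv \<sigma> x) / - ln (1 - x)) (at_left 1)"
    using eventually_in_unit_interval_at_left_1 order_tendstoD(1)[OF tendsto_one_minus_times_cgf_deriv pos]
  proof eventually_elim
    case (elim x)
    then have "0 < cgf_deriv \<sigma> x" "ln (1 - x) \<noteq> 0" by (simp_all add: zero_less_mult_iff)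
    then have "ln (x * cgf_deriv \<sigma> x) = (ln x + ln ((1 - x) * cgf_deriv \<sigma> x)) + - ln (1 - x)"
      using elim by (simp add: ln_mult)
    then show ?case using \<open>ln (1 - x) \<noteq> 0\<close> by (simp only: add_divide_distrib) simp
  qed
  ultimately show ?thesis by (simp add: Lim_transform_eventually)
qed

lemma cgf_asymp_equiv_ln_mean_size:
  assumes pos: "\<alpha> > 0"
  shows "cgf \<sigma> \<sim>[at_left 1] (\<lambda>x. \<alpha> * ln (x * cgf_deriv \<sigma> x))"
proof (rule asymp_equivI')
  have "((\<lambda>x. (cgf \<sigma> x / - ln (1 - x)) / (\<alpha> * (ln (x * cgf_deriv \<sigma> x) / - ln (1 - x))))
      \<longlongrightarrow> \<alpha> / (\<alpha> * 1)) (at_left 1)"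
    using pos by (intro tendsto_divide tendsto_mult tendsto_const tendsto_cgf_over_minus_ln
        tendsto_ln_mean_size_over_minus_ln) auto
  moreover have "eventually (\<lambda>x. (cgf \<sigma> x / - ln (1 - x)) / (\<alpha> * (ln (x * cgf_deriv \<sigma> x) / - ln (1 - x)))
      = cgf \<sigma> x / (\<alpha> * ln (x * cgf_deriv \<sigma> x))) (at_left 1)"
    using eventually_in_unit_interval_at_left_1
  proof eventually_elim
    case (elim x)
    then have "ln (1 - x) \<noteq> 0" by simp
    then show ?case by simp
  qed
  ultimately show "((\<lambda>x. cgf \<sigma> x / (\<alpha> * ln (x * cgf_deriv \<sigma> x))) \<longlongrightarrow> 1) (at_left 1)"
    using pos by (simp add: Lim_transform_eventually)
qed

lemma mean_size_mono:
  assumes "0 \<le> u" "u \<le> v" "v < 1"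
  shows "u * cgf_deriv \<sigma> u \<le> v * cgf_deriv \<sigma> v"
proof -
  note \<sigma> = nonneg_powser_weights
  have "cgf_deriv \<sigma> u \<le> cgf_deriv \<sigma> v"
    unfolding cgf_deriv_def pseries_def
    using assms nonneg_powser_nonneg[OF \<sigma>] sums_pseries[OF \<sigma>, of u] sums_pseries[OF \<sigma>, of v]
    by (intro suminf_le mult_left_mono power_mono) (auto simp: sums_iff pseries_def)
  moreover have "0 \<le> cgf_deriv \<sigma> u"
    unfolding cgf_deriv_def pseries_def
    using assms nonneg_powser_nonneg[OF \<sigma>] sums_pseries[OF \<sigma>, of u]
    by (intro suminf_nonneg) (auto simp: sums_iff pseries_def)
  ultimately show ?thesis using assms by (intro mult_mono) auto
qed

lemma filterlim_at_left_1_of_mean_size: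
  fixes xmu :: "real \<Rightarrow> real"
  assumes "eventually (\<lambda>\<mu>. 0 < xmu \<mu> \<and> xmu \<mu> < 1 \<and> xmu \<mu> * cgf_deriv \<sigma> (xmu \<mu>) = \<mu>) at_top"
  shows "filterlim xmu (at_left 1) at_top"
proof (rule tendsto_imp_filterlim_at_left)
  show "eventually (\<lambda>\<mu>. xmu \<mu> < 1) at_top" using assms by (auto elim: eventually_mono)
  show "(xmu \<longlongrightarrow> 1) at_top"
  proof (rule tendstoI)
    fix \<epsilon> :: real assume "\<epsilon> > 0"
    define \<delta> where "\<delta> = min \<epsilon> (1 / 2)"
    have \<delta>: "0 < \<delta>" "\<delta> \<le> \<epsilon>" "\<delta> < 1" using \<open>\<epsilon> > 0\<close> by (auto simp: \<delta>_def)
    from assms eventually_gt_at_top[of "(1 - \<delta>) * cgf_deriv \<sigma> (1 - \<delta>)"]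
    show "eventually (\<lambda>\<mu>. dist (xmu \<mu>) 1 < \<epsilon>) at_top"
    proof eventually_elim
      case (elim \<mu>)
      have "1 - \<delta> < xmu \<mu>"
      proof (rule ccontr)
        assume "\<not> 1 - \<delta> < xmu \<mu>"
        then show False using elim \<delta> mean_size_mono[of "xmu \<mu>" "1 - \<delta>"] by auto
      qed
      then show ?case using elim \<delta> by (simp add: dist_real_def)
    qed
  qed
qed

end

theorem theorem4p3:
  fixes \<sigma> :: "nat \<Rightarrow> real" and \<alpha> :: real
  assumes nonneg: "\<forall>k\<ge>1. \<sigma> k \<ge> 0"
    and mean: "(\<lambda>n. (\<Sum>k=1..n. \<sigma> k) / real n) \<longlonglongrightarrow> \<alpha>"
    and pos: "\<alpha> > 0"
  shows "(\<forall>x. 0 < x \<and> x < 1 \<longrightarrow> bexp \<sigma> x ncycles = bvar \<sigma> x ncycles)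
    \<and> (\<lambda>x. bexp \<sigma> x ncycles) \<sim>[at_left 1] (\<lambda>x. \<alpha> * ln (bexp \<sigma> x gsize))
    \<and> (\<forall>xmu :: real \<Rightarrow> real.
         eventually (\<lambda>\<mu>. 0 < xmu \<mu> \<and> xmu \<mu> < 1 \<and> bexp \<sigma> (xmu \<mu>) gsize = \<mu>) at_top
         \<longrightarrow> (\<lambda>\<mu>. bexp \<sigma> (xmu \<mu>) ncycles) \<sim>[at_top] (\<lambda>\<mu>. \<alpha> * ln \<mu>))"
proof (intro conjI allI impI)
  have \<sigma>: "nonneg_powser (\<lambda>n. \<sigma> (Suc n))" by (rule nonneg_powser_weights[OF nonneg mean])
  have moments: "bexp \<sigma> x ncycles = cgf \<sigma> x" "bvar \<sigma> x ncycles = cgf \<sigma> x"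
    "bexp \<sigma> x gsize = x * cgf_deriv \<sigma> x" if "0 < x \<and> x < 1" for x
    using bexp_ncycles[OF \<sigma>] bvar_ncycles[OF \<sigma>] bexp_gsize[OF \<sigma>] that by auto
  have equiv: "cgf \<sigma> \<sim>[at_left 1] (\<lambda>x. \<alpha> * ln (x * cgf_deriv \<sigma> x))"
    by (rule cgf_asymp_equiv_ln_mean_size[OF nonneg mean pos])
  show "bexp \<sigma> x ncycles = bvar \<sigma> x ncycles" if "0 < x \<and> x < 1" for x
    using moments[OF that] by simp
  show "(\<lambda>x. bexp \<sigma> x ncycles) \<sim>[at_left 1] (\<lambda>x. \<alpha> * ln (bexp \<sigma> x gsize))"
    by (rule asymp_equiv_transfer[OF equiv];
        use eventually_in_unit_interval_at_left_1 in \<open>eventually_elim, simp add: moments\<close>)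
  fix xmu :: "real \<Rightarrow> real"
  assume "eventually (\<lambda>\<mu>. 0 < xmu \<mu> \<and> xmu \<mu> < 1 \<and> bexp \<sigma> (xmu \<mu>) gsize = \<mu>) at_top"
  then have xmu_size: "eventually (\<lambda>\<mu>. 0 < xmu \<mu> \<and> xmu \<mu> < 1 \<and> xmu \<mu> * cgf_deriv \<sigma> (xmu \<mu>) = \<mu>) at_top"
    by (elim eventually_mono) (auto simp: moments)
  have "(\<lambda>\<mu>. cgf \<sigma> (xmu \<mu>)) \<sim>[at_top] (\<lambda>\<mu>. \<alpha> * ln (xmu \<mu> * cgf_deriv \<sigma> (xmu \<mu>)))"
    by (rule asymp_equiv_compose'[OF equiv filterlim_at_left_1_of_mean_size[OF nonneg mean xmu_size]])
  then show "(\<lambda>\<mu>. bexp \<sigma> (xmu \<mu>) ncycles) \<sim>[at_top] (\<lambda>\<mu>. \<alpha> * ln \<mu>)"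
    by (rule asymp_equiv_transfer; use xmu_size in \<open>eventually_elim, simp add: moments\<close>)
qed

end
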